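(* For all real numbers $a,b,c>0$, \[ \frac{\sqrt{6}\,(a+b+c)^2}{6\sqrt{a^4+b^4+c^4+a^2b^2+b^2c^2+c^2a^2}}\leq \frac{a}{\sqrt{2a^2+b^2+c^2}}+\frac{b}{\sqrt{2b^2+c^2+a^2}}+\frac{c}{\sqrt{2c^2+a^2+b^2}}. \] *)

theory Defs
  imports Complex_Main
begin

end

theory Submission
  imports Defs
begin

text \<open>
  With \<open>u = a \<surd>(2a\<^sup>2+b\<^sup>2+c\<^sup>2)\<close> and its cyclic analogues \<open>v, w\<close>, the right-hand side is
  \<open>a\<^sup>2/u + b\<^sup>2/v + c\<^sup>2/w\<close>, which by the Engel form of Cauchy--Schwarz is at least
  \<open>(a+b+c)\<^sup>2/(u+v+w)\<close>. Moreover \<open>u\<^sup>2+v\<^sup>2+w\<^sup>2\<close> equals twice the quartic \<open>Q\<close> under the root on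
  the left, so the quadratic--arithmetic mean inequality gives \<open>u+v+w \<le> \<surd>6 \<surd>Q\<close>.
\<close>

lemma tangent_le_square_div:
  fixes a t u :: "'a :: linordered_field"
  assumes "u > 0"
  shows "2*a*t - t^2*u \<le> a^2/u"
proof -
  have "a^2/u - (2*a*t - t^2*u) = (a - t*u)^2/u"
    using assms by (simp add: field_simps power2_eq_square)
  also have "\<dots> \<ge> 0" using assms by simp
  finally show ?thesis by simp
qed

text \<open>Each summand is bounded below by its tangent at the common slope \<open>t\<close>.\<close>

lemma square_sum_div_le_sum_square_div:
  fixes a b c u v w :: "'a :: linordered_field"
  assumes "u > 0" "v > 0" "w > 0"
  shows "(a+b+c)^2/(u+v+w) \<le> a^2/u + b^2/v + c^2/w"
proof -
  define t where "t = (a+b+c)/(u+v+w)"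
  have slope: "t*(u+v+w) = a+b+c"
    using assms unfolding t_def by simp
  have "(a+b+c)^2/(u+v+w) = (a+b+c)*t"
    unfolding t_def by (simp add: power2_eq_square)
  also have "\<dots> = 2*(a+b+c)*t - t*(t*(u+v+w))"
    using slope by (simp add: algebra_simps)
  also have "\<dots> = (2*a*t - t^2*u) + (2*b*t - t^2*v) + (2*c*t - t^2*w)"
    by (simp add: power2_eq_square algebra_simps)
  also have "\<dots> \<le> a^2/u + b^2/v + c^2/w"
    using assms by (intro add_mono tangent_le_square_div)
  finally show ?thesis .
qed

lemma sum3_le_sqrt_three_sum_squares:
  fixes u v w :: real
  shows "u+v+w \<le> sqrt (3*(u^2+v^2+w^2))"
proof (rule real_le_rsqrt)
  have "0 \<le> (u-v)^2 + (v-w)^2 + (w-u)^2" by simp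
  then show "(u+v+w)^2 \<le> 3*(u^2+v^2+w^2)"
    by (simp add: power2_eq_square algebra_simps)
qed

theorem mainTheorem5:
  fixes a b c :: real
  assumes "a > 0" and "b > 0" and "c > 0"
  shows "sqrt 6 * (a + b + c)^2 / (6 * sqrt (a^4 + b^4 + c^4 + a^2*b^2 + b^2*c^2 + c^2*a^2))
         \<le> a / sqrt (2*a^2 + b^2 + c^2) + b / sqrt (2*b^2 + c^2 + a^2) + c / sqrt (2*c^2 + a^2 + b^2)"
proof -
  define Q where "Q = a^4 + b^4 + c^4 + a^2*b^2 + b^2*c^2 + c^2*a^2"
  define x where "x = sqrt (2*a^2 + b^2 + c^2)"
  define y where "y = sqrt (2*b^2 + c^2 + a^2)"
  define z where "z = sqrt (2*c^2 + a^2 + b^2)"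
  have pos: "x > 0" "y > 0" "z > 0" "Q > 0"
    using assms unfolding x_def y_def z_def Q_def by (simp_all add: add_pos_nonneg)
  have "(a*x)^2 + (b*y)^2 + (c*z)^2 = 2*Q"
    unfolding x_def y_def z_def Q_def power_mult_distrib by simp algebra
  then have "a*x + b*y + c*z \<le> sqrt 6 * sqrt Q"
    using sum3_le_sqrt_three_sum_squares[of "a*x" "b*y" "c*z"] by (simp flip: real_sqrt_mult)
  moreover have "sqrt 6 * (a+b+c)^2 / (6 * sqrt Q) = (a+b+c)^2 / (sqrt 6 * sqrt Q)"
    using pos real_sqrt_mult_self[of 6] by (simp add: field_simps)
  ultimately have "sqrt 6 * (a+b+c)^2 / (6 * sqrt Q) \<le> (a+b+c)^2 / (a*x + b*y + c*z)"
    using assms pos by (simp add: divide_left_mono add_pos_pos)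
  also have "\<dots> \<le> a^2/(a*x) + b^2/(b*y) + c^2/(c*z)"
    using assms pos by (intro square_sum_div_le_sum_square_div) simp_all
  also have "\<dots> = a/x + b/y + c/z"
    using assms by (simp add: power2_eq_square)
  finally show ?thesis unfolding Q_def x_def y_def z_def .
qed

end
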